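(* Let $p,q,r$ be positive integers. Then each of the following hypergraphs admits a decomposition into tight $9$-cycles: (i) $K^{(3)}_{3p,3q,3r}$ for all $p,q,r\ge 1$; (ii) $K^{(3)}(3p\,|\,3q)$ for all $p\ge 2$ and $q\ge 1$; (iii) $C^{(3)}(3p,3q)$ for all $p,q\ge 2$.
   Context: For disjoint sets $A,B,C$ of sizes $a,b,c$, $K^{(3)}_{a,b,c}$ denotes the complete $3$-partite $3$-uniform hypergraph on $A\cup B\cup C$: a triple $T$ is an edge iff $|T\cap A|=|T\cap B|=|T\cap C|=1$. For disjoint sets $A,B$ with $|A|=a$, $|B|=b$, $K^{(3)}(a\,|\,b)$ denotes the $3$-uniform hypergraph on $A\cup B$ whose edges are exactly the triples $T$ with $|T\cap A|=2$ and $|T\cap B|=1$; and $C^{(3)}(a,b)$ (crossing triplets) denotes the $3$-uniform hypergraph on $A\cup B$ whose edges are exactly the triples meeting both $A$ and $B$. A (3-uniform tight) $k$-cycle is given by a cyclic sequence $v_1,\dots,v_k$ of $k$ distinct vertices, its edges being the triples $\{v_i,v_{i+1},v_{i+2}\}$ ($i=1,\dots,k$, indices mod $k$). A decomposition is a collection of cycles whose edge sets partition the edge set. *)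

theory Defs
  imports Main
begin

text \<open>A 3-uniform hypergraph is represented by its edge set, a set of 3-element vertex sets.\<close>

definition K3_partite :: "'a set \<Rightarrow> 'a set \<Rightarrow> 'a set \<Rightarrow> 'a set set" where
  "K3_partite A B C = {T. T \<subseteq> A \<union> B \<union> C \<and> card T = 3 \<and>
      card (T \<inter> A) = 1 \<and> card (T \<inter> B) = 1 \<and> card (T \<inter> C) = 1}"

definition K3_split :: "'a set \<Rightarrow> 'a set \<Rightarrow> 'a set set" where
  "K3_split A B = {T. T \<subseteq> A \<union> B \<and> card T = 3 \<and> card (T \<inter> A) = 2 \<and> card (T \<inter> B) = 1}"

definition C3_crossing :: "'a set \<Rightarrow> 'a set \<Rightarrow> 'a set set" where
  "C3_crossing A B = {T. T \<subseteq> A \<union> B \<and> card T = 3 \<and> T \<inter> A \<noteq> {} \<and> T \<inter> B \<noteq> {}}"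

definition tight_cycle :: "nat \<Rightarrow> 'a list \<Rightarrow> bool" where
  "tight_cycle k vs \<longleftrightarrow> length vs = k \<and> distinct vs"

definition cycle_edges :: "'a list \<Rightarrow> 'a set set" where
  "cycle_edges vs = {{vs ! i, vs ! ((i + 1) mod length vs), vs ! ((i + 2) mod length vs)} | i. i < length vs}"

definition has_tight_cycle_decomposition :: "nat \<Rightarrow> 'a set set \<Rightarrow> bool" where
  "has_tight_cycle_decomposition k E \<longleftrightarrow>
     (\<exists>\<C> :: 'a list set.
        (\<forall>c\<in>\<C>. tight_cycle k c) \<and>
        (\<forall>c\<in>\<C>. \<forall>d\<in>\<C>. c \<noteq> d \<longrightarrow> cycle_edges c \<inter> cycle_edges d = {}) \<and>
        (\<Union>c\<in>\<C>. cycle_edges c) = E)"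

end

theory Submission
  imports Defs
begin

text \<open>Edge-disjoint unions of tight-cycle decompositions are decompositions, and decompositions
  transfer along injective relabellings of the vertices. The three small cases K(3,3,3), K(6|3)
  and K(9|3) are settled by explicit lists of 9-cycles, checked by evaluation. Cutting the parts
  into triples writes K(3p,3q,3r) as an edge-disjoint union of copies of K(3,3,3). For |A| = 3p
  with p \<ge> 4 and |B| = 3, a 6-subset A' of A splits K(A|B) into K(A'|B), K(A - A'|B) and
  K(A', A - A', B), which reduces p to p - 2; cutting B into triples then handles |B| = 3q.
  Finally the crossing triples of A \<union> B are exactly K(A|B) \<union> K(B|A).\<close>

text \<open>The edges of a cycle as a list, so that decompositions into explicitly given cycles can be
  checked by evaluation.\<close>

definition cycle_edge_list :: "'a list \<Rightarrow> 'a set list" where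
  "cycle_edge_list vs =
     map (\<lambda>i. {vs ! i, vs ! ((i + 1) mod length vs), vs ! ((i + 2) mod length vs)}) [0..<length vs]"

lemma set_cycle_edge_list: "set (cycle_edge_list vs) = cycle_edges vs"
  unfolding cycle_edge_list_def cycle_edges_def Setcompr_eq_image by auto

lemma has_tight_cycle_decomposition_of_list:
  assumes "list_all (tight_cycle k) cs" "distinct (map cycle_edge_list cs)"
    "distinct (concat (map cycle_edge_list cs))" "set (concat (map cycle_edge_list cs)) = E"
  shows "has_tight_cycle_decomposition k E"
  unfolding has_tight_cycle_decomposition_def
proof (intro exI[of _ "set cs"] conjI ballI impI)
  fix c assume "c \<in> set cs"
  thus "tight_cycle k c" using assms(1) by (simp add: list_all_iff)
next
  fix c d assume cd: "c \<in> set cs" "d \<in> set cs" "c \<noteq> d"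
  have "inj_on cycle_edge_list (set cs)" using assms(2) by (simp add: distinct_map)
  hence "cycle_edge_list c \<noteq> cycle_edge_list d" using cd by (meson inj_on_contraD)
  hence "set (cycle_edge_list c) \<inter> set (cycle_edge_list d) = {}"
    using assms(3) cd unfolding distinct_concat_iff by auto
  thus "cycle_edges c \<inter> cycle_edges d = {}" by (simp add: set_cycle_edge_list)
next
  show "(\<Union>c\<in>set cs. cycle_edges c) = E"
    using assms(4) by (simp add: set_cycle_edge_list)
qed

lemma has_tight_cycle_decomposition_Un:
  assumes "has_tight_cycle_decomposition k E1" "has_tight_cycle_decomposition k E2" "E1 \<inter> E2 = {}"
  shows "has_tight_cycle_decomposition k (E1 \<union> E2)"
proof -
  obtain C1 where C1: "\<forall>c\<in>C1. tight_cycle k c"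
    "\<forall>c\<in>C1. \<forall>d\<in>C1. c \<noteq> d \<longrightarrow> cycle_edges c \<inter> cycle_edges d = {}" "(\<Union>c\<in>C1. cycle_edges c) = E1"
    using assms(1) unfolding has_tight_cycle_decomposition_def by blast
  obtain C2 where C2: "\<forall>c\<in>C2. tight_cycle k c"
    "\<forall>c\<in>C2. \<forall>d\<in>C2. c \<noteq> d \<longrightarrow> cycle_edges c \<inter> cycle_edges d = {}" "(\<Union>c\<in>C2. cycle_edges c) = E2"
    using assms(2) unfolding has_tight_cycle_decomposition_def by blast
  show ?thesis unfolding has_tight_cycle_decomposition_def
  proof (intro exI[of _ "C1 \<union> C2"] conjI ballI impI)
    fix c d assume cd: "c \<in> C1 \<union> C2" "d \<in> C1 \<union> C2" "c \<noteq> d"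
    have "cycle_edges c \<subseteq> E1" if "c \<in> C1" for c using C1(3) that by blast
    moreover have "cycle_edges c \<subseteq> E2" if "c \<in> C2" for c using C2(3) that by blast
    ultimately show "cycle_edges c \<inter> cycle_edges d = {}"
      using cd C1(2) C2(2) assms(3) by blast
  qed (use C1 C2 in auto)
qed

lemma cycle_edges_eq_image:
  "cycle_edges c = (\<lambda>i. {c ! i, c ! ((i + 1) mod length c), c ! ((i + 2) mod length c)}) ` {..<length c}"
  unfolding cycle_edges_def by auto

lemma cycle_edges_map: "cycle_edges (map f c) = (`) f ` cycle_edges c"
  unfolding cycle_edges_eq_image image_image length_map
proof (rule image_cong[OF refl])
  fix i assume i: "i \<in> {..<length c}"
  hence "0 < length c" by auto
  with i show "{map f c ! i, map f c ! ((i + 1) mod length c), map f c ! ((i + 2) mod length c)} =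
    f ` {c ! i, c ! ((i + 1) mod length c), c ! ((i + 2) mod length c)}"
    by simp
qed

lemma set_subset_Union_cycle_edges: "set c \<subseteq> \<Union>(cycle_edges c)"
proof
  fix x assume "x \<in> set c"
  then obtain i where "i < length c" "x = c ! i" by (auto simp: in_set_conv_nth)
  thus "x \<in> \<Union>(cycle_edges c)" unfolding cycle_edges_def by blast
qed

lemma has_tight_cycle_decomposition_image:
  assumes "has_tight_cycle_decomposition k E" "inj_on f (\<Union>E)"
  shows "has_tight_cycle_decomposition k ((`) f ` E)"
proof -
  obtain C where C: "\<forall>c\<in>C. tight_cycle k c"
    "\<forall>c\<in>C. \<forall>d\<in>C. c \<noteq> d \<longrightarrow> cycle_edges c \<inter> cycle_edges d = {}" "(\<Union>c\<in>C. cycle_edges c) = E"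
    using assms(1) unfolding has_tight_cycle_decomposition_def by blast
  have sub: "\<Union>(cycle_edges c) \<subseteq> \<Union>E" if "c \<in> C" for c using C(3) that by blast
  show ?thesis unfolding has_tight_cycle_decomposition_def
  proof (intro exI[of _ "map f ` C"] conjI ballI impI)
    fix c' assume "c' \<in> map f ` C"
    then obtain c where c: "c \<in> C" "c' = map f c" by blast
    have "inj_on f (set c)"
      using inj_on_subset[OF assms(2) order_trans[OF set_subset_Union_cycle_edges sub[OF c(1)]]] .
    thus "tight_cycle k c'" using C(1) c by (auto simp: tight_cycle_def distinct_map)
  next
    fix c' d' assume cd: "c' \<in> map f ` C" "d' \<in> map f ` C" "c' \<noteq> d'"
    then obtain c d where c: "c \<in> C" "c' = map f c" and d: "d \<in> C" "d' = map f d" by blast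
    with cd have "c \<noteq> d" by auto
    hence dis: "cycle_edges c \<inter> cycle_edges d = {}" using C(2) c d by blast
    show "cycle_edges c' \<inter> cycle_edges d' = {}"
    proof (rule ccontr)
      assume "cycle_edges c' \<inter> cycle_edges d' \<noteq> {}"
      then obtain S1 S2 where S: "S1 \<in> cycle_edges c" "S2 \<in> cycle_edges d" "f ` S1 = f ` S2"
        using c d by (auto simp: cycle_edges_map)
      have "S1 \<subseteq> \<Union>E" "S2 \<subseteq> \<Union>E" using S sub c d by blast+
      hence "S1 = S2" using S(3) assms(2) by (simp add: inj_on_image_eq_iff)
      thus False using S dis by blast
    qed
  next
    show "(\<Union>c\<in>map f ` C. cycle_edges c) = (`) f ` E"
      using C(3) by (auto simp: cycle_edges_map)
  qed
qed

lemma K3_partite_eq: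
  assumes "A \<inter> B = {}" "A \<inter> C = {}" "B \<inter> C = {}"
  shows "K3_partite A B C = {{a, b, c} |a b c. a \<in> A \<and> b \<in> B \<and> c \<in> C}"
proof (intro set_eqI iffI)
  fix T assume "T \<in> K3_partite A B C"
  hence T: "T \<subseteq> A \<union> B \<union> C" "card (T \<inter> A) = 1" "card (T \<inter> B) = 1" "card (T \<inter> C) = 1"
    by (auto simp: K3_partite_def)
  obtain a b c where abc: "T \<inter> A = {a}" "T \<inter> B = {b}" "T \<inter> C = {c}"
    using T(2-4) by (auto simp: card_1_singleton_iff)
  hence "T = {a, b, c}" using T(1) by blast
  with abc show "T \<in> {{a, b, c} |a b c. a \<in> A \<and> b \<in> B \<and> c \<in> C}" by blast
next
  fix T assume "T \<in> {{a, b, c} |a b c. a \<in> A \<and> b \<in> B \<and> c \<in> C}"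
  then obtain a b c where T: "T = {a, b, c}" "a \<in> A" "b \<in> B" "c \<in> C" by blast
  hence "T \<inter> A = {a}" "T \<inter> B = {b}" "T \<inter> C = {c}" "a \<noteq> b" "a \<noteq> c" "b \<noteq> c"
    using assms by blast+
  with T show "T \<in> K3_partite A B C" by (auto simp: K3_partite_def)
qed

lemma K3_split_eq:
  assumes "A \<inter> B = {}"
  shows "K3_split A B = {{x, y, b} |x y b. x \<in> A \<and> y \<in> A \<and> x \<noteq> y \<and> b \<in> B}"
proof (intro set_eqI iffI)
  fix T assume "T \<in> K3_split A B"
  hence T: "T \<subseteq> A \<union> B" "card (T \<inter> A) = 2" "card (T \<inter> B) = 1"
    by (auto simp: K3_split_def)
  obtain x y b where xyb: "T \<inter> A = {x, y}" "x \<noteq> y" "T \<inter> B = {b}"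
    using T(2,3) by (auto simp: card_1_singleton_iff card_2_iff)
  hence "T = {x, y, b}" using T(1) by blast
  with xyb show "T \<in> {{x, y, b} |x y b. x \<in> A \<and> y \<in> A \<and> x \<noteq> y \<and> b \<in> B}" by blast
next
  fix T assume "T \<in> {{x, y, b} |x y b. x \<in> A \<and> y \<in> A \<and> x \<noteq> y \<and> b \<in> B}"
  then obtain x y b where T: "T = {x, y, b}" "x \<in> A" "y \<in> A" "x \<noteq> y" "b \<in> B" by blast
  hence "T \<inter> A = {x, y}" "T \<inter> B = {b}" "x \<noteq> b" "y \<noteq> b"
    using assms by blast+
  with T show "T \<in> K3_split A B" by (auto simp: K3_split_def)
qed

lemma K3_partite_eq_image_Times:
  assumes "A \<inter> B = {}" "A \<inter> C = {}" "B \<inter> C = {}"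
  shows "K3_partite A B C = (\<lambda>(a, b, c). {a, b, c}) ` (A \<times> B \<times> C)"
  unfolding K3_partite_eq[OF assms] by auto

lemma K3_split_eq_image_Times:
  assumes "A \<inter> B = {}"
  shows "K3_split A B = (\<lambda>((x, y), b). {x, y, b}) ` (Set.filter (\<lambda>(x, y). x \<noteq> y) (A \<times> A) \<times> B)"
  unfolding K3_split_eq[OF assms] by force

lemma card_image_Int_image:
  assumes "inj_on f U" "T \<subseteq> U" "S \<subseteq> U"
  shows "card (f ` T \<inter> f ` S) = card (T \<inter> S)"
proof -
  have "f ` T \<inter> f ` S = f ` (T \<inter> S)"
    using assms by (simp add: inj_on_image_Int)
  thus ?thesis
    using assms by (metis card_image inj_on_subset le_infI1)
qed

lemma K3_partite_image:
  assumes inj: "inj_on f (A \<union> B \<union> C)"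
  shows "K3_partite (f ` A) (f ` B) (f ` C) = (`) f ` K3_partite A B C"
proof -
  have "f ` T \<in> K3_partite (f ` A) (f ` B) (f ` C) \<longleftrightarrow> T \<in> K3_partite A B C"
    if T: "T \<subseteq> A \<union> B \<union> C" for T
  proof -
    have "card (f ` T \<inter> f ` A) = card (T \<inter> A)" "card (f ` T \<inter> f ` B) = card (T \<inter> B)"
      "card (f ` T \<inter> f ` C) = card (T \<inter> C)"
      by (intro card_image_Int_image[OF inj T]; blast)+
    moreover have "card (f ` T) = card T"
      using card_image[OF inj_on_subset[OF inj T]] .
    ultimately show ?thesis
      using T by (auto simp: K3_partite_def image_mono)
  qed
  thus ?thesis
    by (auto simp: K3_partite_def subset_image_iff image_Un[symmetric] image_iff)
qed

lemma K3_split_image: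
  assumes inj: "inj_on f (A \<union> B)"
  shows "K3_split (f ` A) (f ` B) = (`) f ` K3_split A B"
proof -
  have "f ` T \<in> K3_split (f ` A) (f ` B) \<longleftrightarrow> T \<in> K3_split A B"
    if T: "T \<subseteq> A \<union> B" for T
  proof -
    have "card (f ` T \<inter> f ` A) = card (T \<inter> A)" "card (f ` T \<inter> f ` B) = card (T \<inter> B)"
      by (intro card_image_Int_image[OF inj T]; blast)+
    moreover have "card (f ` T) = card T"
      using card_image[OF inj_on_subset[OF inj T]] .
    ultimately show ?thesis
      using T by (auto simp: K3_split_def image_mono)
  qed
  thus ?thesis
    by (auto simp: K3_split_def subset_image_iff image_Un[symmetric] image_iff)
qed

lemma Union_K3_partite_subset: "\<Union>(K3_partite A B C) \<subseteq> A \<union> B \<union> C"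
  by (auto simp: K3_partite_def)

lemma Union_K3_split_subset: "\<Union>(K3_split A B) \<subseteq> A \<union> B"
  by (auto simp: K3_split_def)

lemma image_nth_atLeastLessThan:
  assumes "j \<le> length ws"
  shows "nth ws ` {i..<j} = set (take (j - i) (drop i ws))"
proof -
  have "{i..<j} = (+) i ` {0..<j - i}"
    by (cases "i \<le> j") simp_all
  hence "nth ws ` {i..<j} = (\<lambda>k. ws ! (i + k)) ` {0..<j - i}"
    by (simp only: image_image)
  also have "\<dots> = nth (drop i ws) ` {0..<j - i}"
    using assms by (intro image_cong) auto
  also have "\<dots> = set (take (j - i) (drop i ws))"
    using assms by (intro nth_image) simp
  finally show ?thesis .
qed

lemma has_tight_cycle_decomposition_K3_partite_relabel:
  assumes dec: "has_tight_cycle_decomposition k (K3_partite {0..<l} {l..<l + m} {l + m..<l + m + n})"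
    and "finite A" "finite B" "finite C" "card A = l" "card B = m" "card C = n"
    and "A \<inter> B = {}" "A \<inter> C = {}" "B \<inter> C = {}"
  shows "has_tight_cycle_decomposition k (K3_partite A B C)"
proof -
  obtain xs ys zs where "distinct xs" "set xs = A" "distinct ys" "set ys = B" "distinct zs" "set zs = C"
    using finite_distinct_list assms(2-4) by metis
  moreover from this have "length xs = l" "length ys = m" "length zs = n"
    using assms(5-7) distinct_card by metis+
  ultimately have "distinct (xs @ ys @ zs)" "length (xs @ ys @ zs) = l + m + n"
    and parts: "A = nth (xs @ ys @ zs) ` {0..<l}" "B = nth (xs @ ys @ zs) ` {l..<l + m}"
      "C = nth (xs @ ys @ zs) ` {l + m..<l + m + n}"
    using assms(8-10) by (auto simp: image_nth_atLeastLessThan)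
  hence inj: "inj_on (nth (xs @ ys @ zs)) ({0..<l} \<union> {l..<l + m} \<union> {l + m..<l + m + n})"
    by (intro inj_on_nth) auto
  show ?thesis
    unfolding parts K3_partite_image[OF inj]
    by (rule has_tight_cycle_decomposition_image[OF dec inj_on_subset[OF inj Union_K3_partite_subset]])
qed

lemma has_tight_cycle_decomposition_K3_split_relabel:
  assumes dec: "has_tight_cycle_decomposition k (K3_split {0..<m} {m..<m + n})"
    and "finite A" "finite B" "card A = m" "card B = n" "A \<inter> B = {}"
  shows "has_tight_cycle_decomposition k (K3_split A B)"
proof -
  obtain xs ys where "distinct xs" "set xs = A" "distinct ys" "set ys = B"
    using finite_distinct_list assms(2,3) by metis
  moreover from this have "length xs = m" "length ys = n"
    using assms(4,5) distinct_card by metis+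
  ultimately have "distinct (xs @ ys)" "length (xs @ ys) = m + n"
    and parts: "A = nth (xs @ ys) ` {0..<m}" "B = nth (xs @ ys) ` {m..<m + n}"
    using assms(6) by (auto simp: image_nth_atLeastLessThan)
  hence inj: "inj_on (nth (xs @ ys)) ({0..<m} \<union> {m..<m + n})"
    by (intro inj_on_nth) auto
  show ?thesis
    unfolding parts K3_split_image[OF inj]
    by (rule has_tight_cycle_decomposition_image[OF dec inj_on_subset[OF inj Union_K3_split_subset]])
qed

lemma K3_partite_3_3_3_decomposition:
  "has_tight_cycle_decomposition 9 (K3_partite {0..<3} {3..<6} {6..<9 :: nat})"
  apply (subst K3_partite_eq_image_Times; simp)
  apply (rule has_tight_cycle_decomposition_of_list[where cs =
      "[[0, 5, 8, 1, 3, 7, 2, 4, 6], [0, 3, 6, 1, 4, 8, 2, 5, 7], [0, 4, 7, 1, 5, 6, 2, 3, 8]]"])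
  by code_simp+

lemma K3_split_6_3_decomposition:
  "has_tight_cycle_decomposition 9 (K3_split {0..<6} {6..<9 :: nat})"
  apply (subst K3_split_eq_image_Times; simp)
  apply (rule has_tight_cycle_decomposition_of_list[where cs =
      "[[6, 3, 5, 8, 2, 4, 7, 1, 0], [6, 4, 3, 7, 2, 1, 8, 0, 5], [6, 2, 3, 8, 1, 5, 7, 0, 4],
        [6, 1, 3, 7, 5, 4, 8, 0, 2], [6, 1, 4, 8, 3, 0, 7, 2, 5]]"])
  by code_simp+

lemma K3_split_9_3_decomposition:
  "has_tight_cycle_decomposition 9 (K3_split {0..<9} {9..<12 :: nat})"
  apply (subst K3_split_eq_image_Times; simp)
  apply (rule has_tight_cycle_decomposition_of_list[where cs =
      "[[9, 0, 1, 11, 2, 3, 10, 7, 5], [10, 0, 8, 9, 6, 4, 11, 7, 1], [10, 0, 5, 11, 7, 3, 9, 1, 2],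
        [9, 2, 6, 10, 5, 4, 11, 8, 3], [11, 0, 4, 10, 6, 1, 9, 8, 7], [10, 0, 3, 11, 5, 1, 9, 7, 6],
        [11, 0, 2, 9, 7, 4, 10, 1, 8], [10, 1, 3, 11, 4, 2, 9, 8, 5], [11, 2, 5, 9, 4, 8, 10, 3, 6],
        [9, 0, 7, 10, 8, 6, 11, 1, 4], [9, 0, 6, 11, 7, 2, 10, 5, 3], [10, 2, 8, 11, 5, 6, 9, 3, 4]]"])
  by code_simp+

lemma card_multiple_induct:
  assumes "finite X" "card X = k * p" "1 \<le> p" "X \<subseteq> S"
    and base: "\<And>Y. finite Y \<Longrightarrow> card Y = k \<Longrightarrow> Y \<subseteq> S \<Longrightarrow> P Y"
    and union: "\<And>Y Z. P Y \<Longrightarrow> P Z \<Longrightarrow> Y \<inter> Z = {} \<Longrightarrow> Y \<union> Z \<subseteq> S \<Longrightarrow> P (Y \<union> Z)"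
  shows "P X"
  using assms(1-4)
proof (induction p arbitrary: X)
  case 0
  thus ?case by simp
next
  case (Suc p)
  show ?case
  proof (cases "p = 0")
    case True
    thus ?thesis using Suc.prems base by simp
  next
    case False
    obtain Y where Y: "Y \<subseteq> X" "card Y = k"
      using obtain_subset_with_card_n[of k X] Suc.prems(2) by auto
    hence "finite Y" using Suc.prems(1) finite_subset by blast
    have "card (X - Y) = k * p"
      using card_Diff_subset[OF \<open>finite Y\<close> Y(1)] Suc.prems(2) Y(2) by simp
    hence "P (X - Y)"
      using Suc.IH[of "X - Y"] False Suc.prems(1,4) by auto
    moreover have "P Y" using base \<open>finite Y\<close> Y Suc.prems(4) by blast
    moreover have "X = Y \<union> (X - Y)" using Y(1) by blast
    ultimately show ?thesis
      using union[of Y "X - Y"] Suc.prems(4) by auto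
  qed
qed

lemma K3_partite_Un_left:
  assumes "X \<inter> Y = {}" "(X \<union> Y) \<inter> B = {}" "(X \<union> Y) \<inter> C = {}" "B \<inter> C = {}"
  shows "K3_partite (X \<union> Y) B C = K3_partite X B C \<union> K3_partite Y B C"
    and "K3_partite X B C \<inter> K3_partite Y B C = {}"
proof -
  have d: "X \<inter> B = {}" "X \<inter> C = {}" "Y \<inter> B = {}" "Y \<inter> C = {}" using assms by auto
  show "K3_partite (X \<union> Y) B C = K3_partite X B C \<union> K3_partite Y B C"
    unfolding K3_partite_eq[OF assms(2-4)] K3_partite_eq[OF d(1,2) assms(4)]
      K3_partite_eq[OF d(3,4) assms(4)] by blast
  have "T \<inter> Y = {}" if "T \<in> K3_partite X B C" for T
    using that assms(1) d by (auto simp: K3_partite_def)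
  thus "K3_partite X B C \<inter> K3_partite Y B C = {}" by (fastforce simp: K3_partite_def)
qed

lemma K3_partite_commute12: "K3_partite A B C = K3_partite B A C"
  unfolding K3_partite_def by (simp add: Un_ac conj_ac)

lemma K3_partite_commute13: "K3_partite A B C = K3_partite C B A"
  unfolding K3_partite_def by (simp add: Un_ac conj_ac)

lemma has_tight_cycle_decomposition_K3_partite_grow:
  assumes base: "\<And>X. finite X \<Longrightarrow> card X = d \<Longrightarrow> X \<inter> B = {} \<Longrightarrow> X \<inter> C = {} \<Longrightarrow>
      has_tight_cycle_decomposition k (K3_partite X B C)"
    and "finite A" "card A = d * p" "1 \<le> p" "A \<inter> B = {}" "A \<inter> C = {}" "B \<inter> C = {}"
  shows "has_tight_cycle_decomposition k (K3_partite A B C)"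
proof (rule card_multiple_induct[where S = "- (B \<union> C)", OF assms(2-4)])
  show "A \<subseteq> - (B \<union> C)" using assms(5,6) by blast
next
  fix X assume "finite X" "card X = d" "X \<subseteq> - (B \<union> C)"
  thus "has_tight_cycle_decomposition k (K3_partite X B C)" using base by blast
next
  fix X Y assume dec: "has_tight_cycle_decomposition k (K3_partite X B C)"
    "has_tight_cycle_decomposition k (K3_partite Y B C)" and "X \<inter> Y = {}" "X \<union> Y \<subseteq> - (B \<union> C)"
  hence "X \<inter> Y = {}" "(X \<union> Y) \<inter> B = {}" "(X \<union> Y) \<inter> C = {}" by auto
  note split = K3_partite_Un_left[OF this assms(7)]
  show "has_tight_cycle_decomposition k (K3_partite (X \<union> Y) B C)"
    unfolding split(1) by (rule has_tight_cycle_decomposition_Un[OF dec split(2)])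
qed

lemma has_tight_cycle_decomposition_K3_partite:
  assumes "1 \<le> p" "1 \<le> q" "1 \<le> r" "finite A" "finite B" "finite C"
    "card A = 3 * p" "card B = 3 * q" "card C = 3 * r" "A \<inter> B = {}" "A \<inter> C = {}" "B \<inter> C = {}"
  shows "has_tight_cycle_decomposition 9 (K3_partite A B C)"
proof -
  have dec_3_3_3: "has_tight_cycle_decomposition 9 (K3_partite X Y Z)"
    if "card X = 3" "card Y = 3" "card Z = 3" "X \<inter> Y = {}" "X \<inter> Z = {}" "Y \<inter> Z = {}" for X Y Z
  proof -
    have "finite X" "finite Y" "finite Z" using that(1-3) by (auto intro: card_ge_0_finite)
    thus ?thesis
      using has_tight_cycle_decomposition_K3_partite_relabel[of 9 3 3 3]
        K3_partite_3_3_3_decomposition that by simp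
  qed
  have dec_p_3_3: "has_tight_cycle_decomposition 9 (K3_partite A Y Z)"
    if "card Y = 3" "card Z = 3" "A \<inter> Y = {}" "A \<inter> Z = {}" "Y \<inter> Z = {}" for Y Z
    using has_tight_cycle_decomposition_K3_partite_grow[of 3 Y Z] dec_3_3_3 that assms(1,4,7)
    by blast
  have dec_p_q_3: "has_tight_cycle_decomposition 9 (K3_partite B A Z)"
    if "card Z = 3" "A \<inter> Z = {}" "B \<inter> Z = {}" for Z
  proof (rule has_tight_cycle_decomposition_K3_partite_grow[of 3 A Z _ _ q])
    fix X assume "finite X" "card X = 3" "X \<inter> A = {}" "X \<inter> Z = {}"
    thus "has_tight_cycle_decomposition 9 (K3_partite X A Z)"
      using dec_p_3_3[of X Z] that by (simp add: K3_partite_commute12[of X] Int_commute)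
  qed (use that assms in auto)
  have "has_tight_cycle_decomposition 9 (K3_partite C B A)"
  proof (rule has_tight_cycle_decomposition_K3_partite_grow[of 3 B A _ _ r])
    fix X assume "finite X" "card X = 3" "X \<inter> B = {}" "X \<inter> A = {}"
    thus "has_tight_cycle_decomposition 9 (K3_partite X B A)"
      using dec_p_q_3[of X] by (simp add: K3_partite_commute13[of X] K3_partite_commute12[of B] Int_commute)
  qed (use assms in auto)
  thus ?thesis by (simp add: K3_partite_commute13[of C])
qed

lemma K3_split_Un_left:
  assumes "X \<inter> Y = {}" "X \<inter> B = {}" "Y \<inter> B = {}"
  shows "K3_split (X \<union> Y) B = K3_split X B \<union> K3_split Y B \<union> K3_partite X Y B"
    and "K3_split X B \<inter> K3_split Y B = {}"
    and "(K3_split X B \<union> K3_split Y B) \<inter> K3_partite X Y B = {}"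
proof -
  have "(X \<union> Y) \<inter> B = {}" using assms by auto
  note eqs = K3_split_eq[OF this] K3_split_eq[OF assms(2)] K3_split_eq[OF assms(3)]
    K3_partite_eq[OF assms]
  show "K3_split (X \<union> Y) B = K3_split X B \<union> K3_split Y B \<union> K3_partite X Y B"
    unfolding eqs
  proof (intro equalityI subsetI)
    fix T assume "T \<in> {{x, y, b} |x y b. x \<in> X \<union> Y \<and> y \<in> X \<union> Y \<and> x \<noteq> y \<and> b \<in> B}"
    then obtain x y b where T: "T = {x, y, b}" "x \<in> X \<union> Y" "y \<in> X \<union> Y" "x \<noteq> y" "b \<in> B"
      by blast
    have T': "T = {y, x, b}" using T(1) by (simp add: insert_commute)
    consider "x \<in> X" "y \<in> X" | "x \<in> X" "y \<in> Y" | "x \<in> Y" "y \<in> X" | "x \<in> Y" "y \<in> Y"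
      using T(2,3) by blast
    then show "T \<in> {{x, y, b} |x y b. x \<in> X \<and> y \<in> X \<and> x \<noteq> y \<and> b \<in> B} \<union>
      {{x, y, b} |x y b. x \<in> Y \<and> y \<in> Y \<and> x \<noteq> y \<and> b \<in> B} \<union>
      {{a, b, c} |a b c. a \<in> X \<and> b \<in> Y \<and> c \<in> B}"
    proof cases
      case 1 with T show ?thesis by blast
    next
      case 2 with T show ?thesis by blast
    next
      case 3 with T' T(5) show ?thesis by blast
    next
      case 4 with T show ?thesis by blast
    qed
  next
    fix T assume "T \<in> {{x, y, b} |x y b. x \<in> X \<and> y \<in> X \<and> x \<noteq> y \<and> b \<in> B} \<union>
      {{x, y, b} |x y b. x \<in> Y \<and> y \<in> Y \<and> x \<noteq> y \<and> b \<in> B} \<union>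
      {{a, b, c} |a b c. a \<in> X \<and> b \<in> Y \<and> c \<in> B}"
    thus "T \<in> {{x, y, b} |x y b. x \<in> X \<union> Y \<and> y \<in> X \<union> Y \<and> x \<noteq> y \<and> b \<in> B}"
      using assms(1) by blast
  qed
  have "T \<inter> X \<noteq> {} \<and> T \<inter> Y = {}" if "T \<in> K3_split X B" for T
    using that assms by (auto simp: K3_split_def)
  moreover have "T \<inter> Y \<noteq> {} \<and> T \<inter> X = {}" if "T \<in> K3_split Y B" for T
    using that assms by (auto simp: K3_split_def)
  moreover have "T \<inter> X \<noteq> {} \<and> T \<inter> Y \<noteq> {}" if "T \<in> K3_partite X Y B" for T
    using that by (auto simp: K3_partite_def)
  ultimately show "K3_split X B \<inter> K3_split Y B = {}"
    and "(K3_split X B \<union> K3_split Y B) \<inter> K3_partite X Y B = {}"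
    by blast+
qed

lemma K3_split_Un_right:
  assumes "A \<inter> B1 = {}" "A \<inter> B2 = {}" "B1 \<inter> B2 = {}"
  shows "K3_split A (B1 \<union> B2) = K3_split A B1 \<union> K3_split A B2"
    and "K3_split A B1 \<inter> K3_split A B2 = {}"
proof -
  have "A \<inter> (B1 \<union> B2) = {}" using assms by auto
  show "K3_split A (B1 \<union> B2) = K3_split A B1 \<union> K3_split A B2"
    unfolding K3_split_eq[OF \<open>A \<inter> (B1 \<union> B2) = {}\<close>] K3_split_eq[OF assms(1)] K3_split_eq[OF assms(2)]
    by blast
  have "T \<inter> B1 \<noteq> {} \<and> T \<inter> B2 = {}" if "T \<in> K3_split A B1" for T
    using that assms by (auto simp: K3_split_def)
  moreover have "T \<inter> B2 \<noteq> {}" if "T \<in> K3_split A B2" for T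
    using that by (auto simp: K3_split_def)
  ultimately show "K3_split A B1 \<inter> K3_split A B2 = {}"
    by blast
qed

lemma has_tight_cycle_decomposition_K3_split_3:
  assumes "2 \<le> p" "finite A" "card A = 3 * p" "card B = 3" "A \<inter> B = {}"
  shows "has_tight_cycle_decomposition 9 (K3_split A B)"
  using assms(1-3,5)
proof (induction p arbitrary: A rule: less_induct)
  case (less p)
  have "finite B" using assms(4) by (intro card_ge_0_finite) simp
  have dec_6_3: "has_tight_cycle_decomposition 9 (K3_split X B)"
    if "finite X" "card X = 6" "X \<inter> B = {}" for X
    using has_tight_cycle_decomposition_K3_split_relabel[of 9 6 3] K3_split_6_3_decomposition
      that \<open>finite B\<close> assms(4) by simp
  consider "p = 2" | "p = 3" | "4 \<le> p" using less.prems(1) by linarith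
  thus ?case
  proof cases
    case 1
    thus ?thesis using dec_6_3 less.prems by simp
  next
    case 2
    thus ?thesis
      using has_tight_cycle_decomposition_K3_split_relabel[of 9 9 3] K3_split_9_3_decomposition
        less.prems \<open>finite B\<close> assms(4) by simp
  next
    case 3
    obtain A1 where A1: "A1 \<subseteq> A" "card A1 = 6"
      using obtain_subset_with_card_n[of 6 A] less.prems(3) 3 by auto
    define A2 where "A2 = A - A1"
    have "finite A1" "finite A2" using A1(1) less.prems(2) finite_subset by (auto simp: A2_def)
    have "card A2 = 3 * (p - 2)"
      using card_Diff_subset[OF \<open>finite A1\<close> A1(1)] less.prems(3) A1(2) by (simp add: A2_def)
    have parts: "A = A1 \<union> A2" "A1 \<inter> A2 = {}" "A1 \<inter> B = {}" "A2 \<inter> B = {}"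
      using A1(1) less.prems(4) by (auto simp: A2_def)
    have "has_tight_cycle_decomposition 9 (K3_split A1 B)"
      using dec_6_3 \<open>finite A1\<close> A1(2) parts by blast
    moreover have "has_tight_cycle_decomposition 9 (K3_split A2 B)"
      using less.IH[of "p - 2" A2] 3 \<open>finite A2\<close> \<open>card A2 = 3 * (p - 2)\<close> parts by auto
    moreover have "has_tight_cycle_decomposition 9 (K3_partite A1 A2 B)"
      by (rule has_tight_cycle_decomposition_K3_partite[of 2 "p - 2" 1])
        (use 3 A1 \<open>finite A1\<close> \<open>finite A2\<close> \<open>card A2 = 3 * (p - 2)\<close> \<open>finite B\<close> assms(4) parts in auto)
    ultimately show ?thesis
      unfolding parts(1) K3_split_Un_left[OF parts(2-4)]
      using K3_split_Un_left(2,3)[OF parts(2-4)] by (intro has_tight_cycle_decomposition_Un)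
  qed
qed

lemma has_tight_cycle_decomposition_K3_split:
  assumes "2 \<le> p" "1 \<le> q" "finite A" "finite B" "card A = 3 * p" "card B = 3 * q" "A \<inter> B = {}"
  shows "has_tight_cycle_decomposition 9 (K3_split A B)"
proof (rule card_multiple_induct[where S = "- A", OF assms(4,6,2)])
  show "B \<subseteq> - A" using assms(7) by blast
next
  fix X assume "finite X" "card X = 3" "X \<subseteq> - A"
  thus "has_tight_cycle_decomposition 9 (K3_split A X)"
    using has_tight_cycle_decomposition_K3_split_3[of p A X] assms by blast
next
  fix X Y assume dec: "has_tight_cycle_decomposition 9 (K3_split A X)"
    "has_tight_cycle_decomposition 9 (K3_split A Y)" and "X \<inter> Y = {}" "X \<union> Y \<subseteq> - A"
  hence "A \<inter> X = {}" "A \<inter> Y = {}" "X \<inter> Y = {}" by auto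
  note split = K3_split_Un_right[OF this]
  show "has_tight_cycle_decomposition 9 (K3_split A (X \<union> Y))"
    unfolding split(1) by (rule has_tight_cycle_decomposition_Un[OF dec split(2)])
qed

lemma C3_crossing_eq_K3_split_Un:
  assumes "A \<inter> B = {}"
  shows "C3_crossing A B = K3_split A B \<union> K3_split B A"
proof (intro equalityI subsetI)
  fix T assume "T \<in> C3_crossing A B"
  hence T: "T \<subseteq> A \<union> B" "card T = 3" "T \<inter> A \<noteq> {}" "T \<inter> B \<noteq> {}"
    by (auto simp: C3_crossing_def)
  have "finite T" using T(2) by (intro card_ge_0_finite) simp
  have "T = (T \<inter> A) \<union> (T \<inter> B)" using T(1) by blast
  hence "card T = card (T \<inter> A) + card (T \<inter> B)"
    using card_Un_disjoint[of "T \<inter> A" "T \<inter> B"] \<open>finite T\<close> assms by auto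
  moreover have "card (T \<inter> A) \<noteq> 0" "card (T \<inter> B) \<noteq> 0" using \<open>finite T\<close> T(3,4) by auto
  ultimately have "card (T \<inter> A) = 2 \<and> card (T \<inter> B) = 1 \<or> card (T \<inter> A) = 1 \<and> card (T \<inter> B) = 2"
    using T(2) by linarith
  thus "T \<in> K3_split A B \<union> K3_split B A"
    using T(1,2) by (auto simp: K3_split_def Int_commute Un_commute)
qed (auto simp: K3_split_def C3_crossing_def)

lemma K3_split_disjoint_swap: "K3_split A B \<inter> K3_split B A = {}"
  by (auto simp: K3_split_def)

theorem lemma11:
  fixes A B C :: "'a set" and p q r :: nat
  shows
   "(p \<ge> 1 \<and> q \<ge> 1 \<and> r \<ge> 1 \<and> finite A \<and> finite B \<and> finite C \<and>
      card A = 3 * p \<and> card B = 3 * q \<and> card C = 3 * r \<and>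
      A \<inter> B = {} \<and> A \<inter> C = {} \<and> B \<inter> C = {}
      \<longrightarrow> has_tight_cycle_decomposition 9 (K3_partite A B C))
    \<and> (p \<ge> 2 \<and> q \<ge> 1 \<and> finite A \<and> finite B \<and>
      card A = 3 * p \<and> card B = 3 * q \<and> A \<inter> B = {}
      \<longrightarrow> has_tight_cycle_decomposition 9 (K3_split A B))
    \<and> (p \<ge> 2 \<and> q \<ge> 2 \<and> finite A \<and> finite B \<and>
      card A = 3 * p \<and> card B = 3 * q \<and> A \<inter> B = {}
      \<longrightarrow> has_tight_cycle_decomposition 9 (C3_crossing A B))"
proof (intro conjI impI; elim conjE)
  show "has_tight_cycle_decomposition 9 (K3_partite A B C)"
    if "p \<ge> 1" "q \<ge> 1" "r \<ge> 1" "finite A" "finite B" "finite C"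
      "card A = 3 * p" "card B = 3 * q" "card C = 3 * r" "A \<inter> B = {}" "A \<inter> C = {}" "B \<inter> C = {}"
    using has_tight_cycle_decomposition_K3_partite[OF that] .
  show "has_tight_cycle_decomposition 9 (K3_split A B)"
    if "p \<ge> 2" "q \<ge> 1" "finite A" "finite B" "card A = 3 * p" "card B = 3 * q" "A \<inter> B = {}"
    using has_tight_cycle_decomposition_K3_split[OF that] .
  show "has_tight_cycle_decomposition 9 (C3_crossing A B)"
    if "p \<ge> 2" "q \<ge> 2" "finite A" "finite B" "card A = 3 * p" "card B = 3 * q" "A \<inter> B = {}"
  proof -
    have "has_tight_cycle_decomposition 9 (K3_split A B)"
      using has_tight_cycle_decomposition_K3_split[of p q A B] that by simp
    moreover have "has_tight_cycle_decomposition 9 (K3_split B A)"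
      using has_tight_cycle_decomposition_K3_split[of q p B A] that by (simp add: Int_commute)
    ultimately show ?thesis
      unfolding C3_crossing_eq_K3_split_Un[OF that(7)]
      using K3_split_disjoint_swap by (rule has_tight_cycle_decomposition_Un)
  qed
qed

end
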